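(* Let $\mathcal{A}$ and $\mathcal{B}$ be unital Banach algebras, $T\in\mathcal{L}^1(\mathcal{A},\mathcal{B})$ and $\Psi\in\mathcal{L}^2(\mathcal{B},\mathcal{B})$. Then $$\|\delta_T^2\,T^{\vee}\|\leq \mathrm{adef}(\Psi)\cdot\|T\|^3.$$
   Context: $\mathcal{L}^n(\mathcal{A},\mathcal{B})$ denotes the space of bounded $n$-linear maps $\mathcal{A}^n\to\mathcal{B}$ with the operator norm. $T^{\vee}\in\mathcal{L}^2(\mathcal{A},\mathcal{B})$ is defined by $T^{\vee}(x,y)=T(xy)-\Psi(T(x),T(y))$. The operator $\delta_T^2:\mathcal{L}^2(\mathcal{A},\mathcal{B})\to\mathcal{L}^3(\mathcal{A},\mathcal{B})$ is defined by $\delta_T^2\phi(x,y,z)=\Psi(T(x),\phi(y,z))-\phi(xy,z)+\phi(x,yz)-\Psi(\phi(x,y),T(z))$. The associative defect is $\mathrm{adef}(\Psi)=\sup\{\|\Psi(u,\Psi(v,w))-\Psi(\Psi(u,v),w)\|: u,v,w\in\mathcal{B},\ \|u\|,\|v\|,\|w\|\leq1\}$. *)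

theory Defs
  imports "HOL-Analysis.Analysis"
begin

definition norm3 :: "('a::real_normed_vector \<Rightarrow> 'a \<Rightarrow> 'a \<Rightarrow> 'b::real_normed_vector) \<Rightarrow> real" where
  "norm3 \<phi> = Sup {norm (\<phi> x y z) | x y z. norm x \<le> 1 \<and> norm y \<le> 1 \<and> norm z \<le> 1}"

definition Tvee :: "('a::real_normed_algebra_1 \<Rightarrow> 'b::real_normed_algebra_1) \<Rightarrow> ('b \<Rightarrow> 'b \<Rightarrow> 'b) \<Rightarrow> 'a \<Rightarrow> 'a \<Rightarrow> 'b" where
  "Tvee T \<Psi> = (\<lambda>x y. T (x * y) - \<Psi> (T x) (T y))"

definition delta2 :: "('a::real_normed_algebra_1 \<Rightarrow> 'b::real_normed_algebra_1) \<Rightarrow> ('b \<Rightarrow> 'b \<Rightarrow> 'b)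
    \<Rightarrow> ('a \<Rightarrow> 'a \<Rightarrow> 'b) \<Rightarrow> 'a \<Rightarrow> 'a \<Rightarrow> 'a \<Rightarrow> 'b" where
  "delta2 T \<Psi> \<phi> = (\<lambda>x y z. \<Psi> (T x) (\<phi> y z) - \<phi> (x * y) z + \<phi> x (y * z) - \<Psi> (\<phi> x y) (T z))"

definition adef :: "('b::real_normed_vector \<Rightarrow> 'b \<Rightarrow> 'b) \<Rightarrow> real" where
  "adef \<Psi> = Sup {norm (\<Psi> u (\<Psi> v w) - \<Psi> (\<Psi> u v) w) | u v w. norm u \<le> 1 \<and> norm v \<le> 1 \<and> norm w \<le> 1}"

end

theory Submission
  imports Defs
begin

text \<open>In \<open>\<delta>\<^sub>T\<^sup>2 T\<^sup>\<or>\<close> the terms \<open>T((xy)z)\<close> and \<open>T(x(yz))\<close> cancel by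
  associativity of \<open>\<A>\<close>, and the terms \<open>\<Psi>(T x, T(yz))\<close>, \<open>\<Psi>(T(xy), T z)\<close> each occur
  twice with opposite signs, leaving (up to sign) the associator of \<open>\<Psi>\<close> at \<open>(T x, T y, T z)\<close>. The
  associator is trilinear, so rescaling to the unit ball bounds its norm by
  \<open>adef \<Psi> \<parallel>T x\<parallel> \<parallel>T y\<parallel> \<parallel>T z\<parallel> \<le> adef \<Psi> \<parallel>T\<parallel>\<^sup>3\<close>.\<close>

lemma delta2_Tvee_eq_associator:
  assumes "bounded_bilinear \<Psi>"
  shows "delta2 T \<Psi> (Tvee T \<Psi>) x y z = \<Psi> (\<Psi> (T x) (T y)) (T z) - \<Psi> (T x) (\<Psi> (T y) (T z))"
proof -
  interpret \<Psi>: bounded_bilinear \<Psi> by fact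
  show ?thesis
    unfolding delta2_def Tvee_def
    by (simp add: \<Psi>.diff_left \<Psi>.diff_right mult.assoc algebra_simps)
qed

lemma bdd_above_norm_associator:
  assumes "bounded_bilinear \<Psi>"
  shows "bdd_above {norm (\<Psi> u (\<Psi> v w) - \<Psi> (\<Psi> u v) w) | u v w.
                      norm u \<le> 1 \<and> norm v \<le> 1 \<and> norm w \<le> 1}"
proof -
  interpret \<Psi>: bounded_bilinear \<Psi> by fact
  obtain K where K: "\<And>a b. norm (\<Psi> a b) \<le> norm a * norm b * K" and "K \<ge> 0"
    using \<Psi>.nonneg_bounded by blast
  have bound: "norm (\<Psi> a b) \<le> A * B * K" if "norm a \<le> A" "norm b \<le> B" for a b A B
    using K[of a b] \<open>K \<ge> 0\<close> that
    by (meson mult_mono mult_right_mono norm_ge_zero order_trans)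
  have "norm (\<Psi> u (\<Psi> v w) - \<Psi> (\<Psi> u v) w) \<le> 1 * (1 * 1 * K) * K + (1 * 1 * K) * 1 * K"
    if "norm u \<le> 1" "norm v \<le> 1" "norm w \<le> 1" for u v w
    using norm_triangle_ineq4[of "\<Psi> u (\<Psi> v w)" "\<Psi> (\<Psi> u v) w"] that
      bound[OF that(1) bound[OF that(2,3)]] bound[OF bound[OF that(1,2)] that(3)]
    by linarith
  then show ?thesis
    unfolding bdd_above_def by blast
qed
lemma norm_associator_le_adef:
  assumes "bounded_bilinear \<Psi>" "norm u \<le> 1" "norm v \<le> 1" "norm w \<le> 1"
  shows "norm (\<Psi> u (\<Psi> v w) - \<Psi> (\<Psi> u v) w) \<le> adef \<Psi>"
  unfolding adef_def
  by (rule cSup_upper[OF _ bdd_above_norm_associator[OF assms(1)]]) (use assms in blast)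

lemma adef_nonneg:
  assumes "bounded_bilinear \<Psi>"
  shows "adef \<Psi> \<ge> 0"
  by (rule order_trans[OF norm_ge_zero norm_associator_le_adef[OF assms, of 0 0 0]]) simp_all

lemma norm_associator_le_adef_mult:
  assumes "bounded_bilinear \<Psi>"
  shows "norm (\<Psi> u (\<Psi> v w) - \<Psi> (\<Psi> u v) w) \<le> adef \<Psi> * (norm u * norm v * norm w)"
proof (cases "u = 0 \<or> v = 0 \<or> w = 0")
  case True
  interpret \<Psi>: bounded_bilinear \<Psi> by fact
  show ?thesis
    using True adef_nonneg[OF assms] by (auto simp: \<Psi>.zero_left \<Psi>.zero_right)
next
  case False
  interpret \<Psi>: bounded_bilinear \<Psi> by fact
  let ?u = "u /\<^sub>R norm u" and ?v = "v /\<^sub>R norm v" and ?w = "w /\<^sub>R norm w"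
  have units: "norm ?u \<le> 1" "norm ?v \<le> 1" "norm ?w \<le> 1"
    using False by auto
  have "\<Psi> u (\<Psi> v w) - \<Psi> (\<Psi> u v) w
      = (norm u * norm v * norm w) *\<^sub>R (\<Psi> ?u (\<Psi> ?v ?w) - \<Psi> (\<Psi> ?u ?v) ?w)"
    using False
    by (simp add: \<Psi>.scaleR_left \<Psi>.scaleR_right scaleR_diff_right mult.commute mult.left_commute)
  then have "norm (\<Psi> u (\<Psi> v w) - \<Psi> (\<Psi> u v) w)
      = (norm u * norm v * norm w) * norm (\<Psi> ?u (\<Psi> ?v ?w) - \<Psi> (\<Psi> ?u ?v) ?w)"
    by simp
  also have "\<dots> \<le> (norm u * norm v * norm w) * adef \<Psi>"
    by (intro mult_left_mono norm_associator_le_adef[OF assms units]) simp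
  finally show ?thesis
    by (simp add: mult.commute)
qed

lemma norm3_le:
  assumes "\<And>x y z. norm x \<le> 1 \<Longrightarrow> norm y \<le> 1 \<Longrightarrow> norm z \<le> 1 \<Longrightarrow> norm (\<phi> x y z) \<le> C"
  shows "norm3 \<phi> \<le> C"
  unfolding norm3_def
proof (rule cSup_least)
  show "{norm (\<phi> x y z) | x y z. norm x \<le> 1 \<and> norm y \<le> 1 \<and> norm z \<le> 1} \<noteq> {}"
    by (metis (mono_tags, lifting) empty_iff mem_Collect_eq norm_zero order_refl zero_le_one)
qed (use assms in blast)

lemma norm_le_onorm_unit_ball:
  assumes "bounded_linear T" "norm x \<le> 1"
  shows "norm (T x) \<le> onorm T"
  using onorm[OF assms(1), of x] mult_left_mono[OF assms(2) onorm_pos_le[OF assms(1)]]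
  by linarith

theorem lemma2p1:
  fixes T :: "'a::{real_normed_algebra_1, banach} \<Rightarrow> 'b::{real_normed_algebra_1, banach}"
    and \<Psi> :: "'b \<Rightarrow> 'b \<Rightarrow> 'b"
  assumes "bounded_linear T"
    and "bounded_bilinear \<Psi>"
  shows "norm3 (delta2 T \<Psi> (Tvee T \<Psi>)) \<le> adef \<Psi> * onorm T ^ 3"
proof (rule norm3_le)
  fix x y z :: 'a
  assume unit: "norm x \<le> 1" "norm y \<le> 1" "norm z \<le> 1"
  have "norm (delta2 T \<Psi> (Tvee T \<Psi>) x y z)
      = norm (\<Psi> (T x) (\<Psi> (T y) (T z)) - \<Psi> (\<Psi> (T x) (T y)) (T z))"
    unfolding delta2_Tvee_eq_associator[OF assms(2)] by (rule norm_minus_commute)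
  also have "\<dots> \<le> adef \<Psi> * (norm (T x) * norm (T y) * norm (T z))"
    by (rule norm_associator_le_adef_mult[OF assms(2)])
  also have "\<dots> \<le> adef \<Psi> * (onorm T * onorm T * onorm T)"
    using norm_le_onorm_unit_ball[OF assms(1)] unit adef_nonneg[OF assms(2)] onorm_pos_le[OF assms(1)]
    by (intro mult_left_mono mult_mono) auto
  finally show "norm (delta2 T \<Psi> (Tvee T \<Psi>) x y z) \<le> adef \<Psi> * onorm T ^ 3"
    by (simp add: power3_eq_cube)
qed

end
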